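(* Let $G$ be a finite group and $x\in G$. If $C_G(x)$ is a maximal centralizer in $G$, then $\beta_G(x)\cup Z(G)$ is a subgroup of $G$.
   Context: For a finite group $G$, $C_G(x)$ denotes the centralizer of $x\in G$ and $Z(G)$ the center. $\beta_G(x)=\{y\in G\mid C_G(y)=C_G(x)\}$. A centralizer $C_G(x)$ is called maximal if it is not contained in any other proper centralizer of $G$ (i.e. there is no $y\in G$ with $C_G(x)\subsetneq C_G(y)\neq G$). *)

theory Defs
  imports "HOL-Algebra.Algebra"
begin

definition centralizer :: "('a, 'b) monoid_scheme \<Rightarrow> 'a \<Rightarrow> 'a set" where
  "centralizer G x = {y \<in> carrier G. y \<otimes>\<^bsub>G\<^esub> x = x \<otimes>\<^bsub>G\<^esub> y}"

definition group_center :: "('a, 'b) monoid_scheme \<Rightarrow> 'a set" where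
  "group_center G = {z \<in> carrier G. \<forall>y \<in> carrier G. z \<otimes>\<^bsub>G\<^esub> y = y \<otimes>\<^bsub>G\<^esub> z}"

definition beta :: "('a, 'b) monoid_scheme \<Rightarrow> 'a \<Rightarrow> 'a set" where
  "beta G x = {y \<in> carrier G. centralizer G y = centralizer G x}"

definition maximal_centralizer :: "('a, 'b) monoid_scheme \<Rightarrow> 'a \<Rightarrow> bool" where
  "maximal_centralizer G x \<longleftrightarrow>
     \<not> (\<exists>y \<in> carrier G. centralizer G x \<subset> centralizer G y \<and> centralizer G y \<noteq> carrier G)"

end

theory Submission
  imports Defs
begin

text \<open>
  The set in question consists of the y with C(y) = C(x) or C(y) = G. Inversion does not change
  centralizers, and neither does multiplication by a central element. If C(a) = C(b) = C(x),
  then C(x) = C(a) \<inter> C(b) \<subseteq> C(ab), so maximality of C(x) leaves only C(ab) = C(x) or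
  C(ab) = G.
\<close>

lemma centralizer_subset: "centralizer G a \<subseteq> carrier G"
  unfolding centralizer_def by auto

lemma centralizer_sym:
  "a \<in> carrier G \<Longrightarrow> y \<in> carrier G \<Longrightarrow> y \<in> centralizer G a \<longleftrightarrow> a \<in> centralizer G y"
  unfolding centralizer_def by auto

lemma group_center_iff_centralizer:
  "a \<in> carrier G \<Longrightarrow> a \<in> group_center G \<longleftrightarrow> centralizer G a = carrier G"
  unfolding group_center_def centralizer_def by (simp add: set_eq_iff) metis

lemma (in group) subgroup_centralizer:
  assumes "a \<in> carrier G"
  shows "subgroup (centralizer G a) G"
proof (rule subgroupI)
  show "centralizer G a \<subseteq> carrier G" by (rule centralizer_subset)
  show "centralizer G a \<noteq> {}" using assms unfolding centralizer_def by auto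
next
  fix y assume "y \<in> centralizer G a"
  then have y: "y \<in> carrier G" "y \<otimes> a = a \<otimes> y" unfolding centralizer_def by auto
  have "inv y \<otimes> a = inv y \<otimes> (a \<otimes> y) \<otimes> inv y"
    using assms y(1) by (simp add: m_assoc)
  also have "\<dots> = inv y \<otimes> (y \<otimes> a) \<otimes> inv y"
    using y(2) by simp
  also have "\<dots> = a \<otimes> inv y"
    using assms y(1) by (simp flip: m_assoc)
  finally show "inv y \<in> centralizer G a" using y(1) unfolding centralizer_def by auto
next
  fix y z assume "y \<in> centralizer G a" "z \<in> centralizer G a"
  then show "y \<otimes> z \<in> centralizer G a"
    using assms unfolding centralizer_def by (auto simp: m_assoc) (simp flip: m_assoc)
qed

lemma (in group) centralizer_inv:
  assumes "a \<in> carrier G"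
  shows "centralizer G (inv a) = centralizer G a"
proof (rule Set.set_eqI)
  fix y
  show "y \<in> centralizer G (inv a) \<longleftrightarrow> y \<in> centralizer G a"
  proof (cases "y \<in> carrier G")
    case True
    then interpret C: subgroup "centralizer G y" G by (rule subgroup_centralizer)
    have "y \<in> centralizer G (inv a) \<longleftrightarrow> inv a \<in> centralizer G y"
      using assms True by (simp add: centralizer_sym)
    also have "\<dots> \<longleftrightarrow> a \<in> centralizer G y"
      using C.m_inv_closed assms by (metis inv_inv)
    also have "\<dots> \<longleftrightarrow> y \<in> centralizer G a"
      using assms True by (simp add: centralizer_sym)
    finally show ?thesis .
  next
    case False
    then show ?thesis unfolding centralizer_def by simp
  qed
qed

lemma (in group) centralizer_Int_subset_mult:
  assumes "a \<in> carrier G" "b \<in> carrier G"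
  shows "centralizer G a \<inter> centralizer G b \<subseteq> centralizer G (a \<otimes> b)"
proof
  fix y assume "y \<in> centralizer G a \<inter> centralizer G b"
  then have y: "y \<in> carrier G" "a \<in> centralizer G y" "b \<in> centralizer G y"
    using assms by (auto simp: centralizer_def)
  then have "a \<otimes> b \<in> centralizer G y"
    using subgroup.m_closed[OF subgroup_centralizer[OF y(1)]] by blast
  then show "y \<in> centralizer G (a \<otimes> b)"
    using assms y(1) by (simp add: centralizer_sym)
qed

lemma (in group) centralizer_mult_center:
  assumes "z \<in> group_center G" "b \<in> carrier G"
  shows "centralizer G (z \<otimes> b) = centralizer G b"
proof
  have z: "z \<in> carrier G"
    using assms(1) by (simp add: group_center_def)
  then have Cz: "centralizer G z = carrier G"
    using assms(1) by (simp add: group_center_iff_centralizer)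
  have "centralizer G (z \<otimes> b) = centralizer G (inv z) \<inter> centralizer G (z \<otimes> b)"
    using z Cz centralizer_subset[of G "z \<otimes> b"] by (simp add: centralizer_inv Int_absorb1)
  also have "\<dots> \<subseteq> centralizer G (inv z \<otimes> (z \<otimes> b))"
    using z assms(2) by (simp add: centralizer_Int_subset_mult)
  also have "inv z \<otimes> (z \<otimes> b) = b"
    using z assms(2) by (simp flip: m_assoc)
  finally show "centralizer G (z \<otimes> b) \<subseteq> centralizer G b" .
  show "centralizer G b \<subseteq> centralizer G (z \<otimes> b)"
    using centralizer_Int_subset_mult[OF z assms(2)] Cz centralizer_subset[of G b] by auto
qed

lemma maximal_centralizerD:
  assumes "maximal_centralizer G x" "y \<in> carrier G" "centralizer G x \<subseteq> centralizer G y"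
  shows "centralizer G y = centralizer G x \<or> centralizer G y = carrier G"
  using assms unfolding maximal_centralizer_def by blast

lemma beta_Un_group_center_eq:
  "beta G x \<union> group_center G
     = {y \<in> carrier G. centralizer G y = centralizer G x \<or> centralizer G y = carrier G}"
  unfolding beta_def using group_center_iff_centralizer[of _ G] by (auto simp: group_center_def)

theorem proposition3p2:
  fixes G (structure) and x
  assumes "group G" and "finite (carrier G)" and "x \<in> carrier G"
    and "maximal_centralizer G x"
  shows "subgroup (beta G x \<union> group_center G) G"
proof -
  interpret group G by fact
  let ?S = "{y \<in> carrier G. centralizer G y = centralizer G x \<or> centralizer G y = carrier G}"
  have "subgroup ?S G"
  proof (rule subgroupI)
    show "?S \<subseteq> carrier G" "?S \<noteq> {}"
      using assms(3) by auto
    show "inv a \<in> ?S" if "a \<in> ?S" for a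
      using that by (simp add: centralizer_inv)
    show "a \<otimes> b \<in> ?S" if a: "a \<in> ?S" and b: "b \<in> ?S" for a b
    proof -
      have ab: "a \<in> carrier G" "b \<in> carrier G"
        using a b by auto
      consider "a \<in> group_center G" | "b \<in> group_center G"
        | "centralizer G a = centralizer G x" "centralizer G b = centralizer G x"
        using a b by (auto simp: group_center_iff_centralizer)
      then show ?thesis
      proof cases
        case 1
        then show ?thesis using b ab by (simp add: centralizer_mult_center)
      next
        case 2
        then have "a \<otimes> b = b \<otimes> a"
          using ab by (simp add: group_center_def)
        with 2 show ?thesis using a ab by (simp add: centralizer_mult_center)
      next
        case 3
        then have "centralizer G x \<subseteq> centralizer G (a \<otimes> b)"
          using centralizer_Int_subset_mult[OF ab] by simp
        then show ?thesis
          using maximal_centralizerD[OF assms(4)] ab by simp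
      qed
    qed
  qed
  then show ?thesis
    by (simp only: beta_Un_group_center_eq)
qed

end
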